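(* Every formula derivable in the axiomatic system HDML-AX described below is valid: for all HDML formulas $\varphi$, if $\vdash\varphi$ then $\varphi$ is true at every cell of every HDML model.
   Context: A cubical set consists of pairwise disjoint sets $Q_n$ ($n\in\mathbb N$), $Q=\bigcup_n Q_n$, and for $n\ge1$, $1\le i\le n$, maps $s_i,t_i:Q_n\to Q_{n-1}$ satisfying $\alpha_i\circ\beta_j=\beta_{j-1}\circ\alpha_i$ for $1\le i<j\le n$, $\alpha,\beta\in\{s,t\}$. An HDML model is $\mathcal H=(Q,\bar s,\bar t,l,V)$ with $l:Q_1\to\Sigma$ satisfying $l(s_i(q))=l(t_i(q))$ for $q\in Q_2$, $i\in\{1,2\}$, and $V:Q\to2^{AP}$. HDML formulas: $\varphi::=p\mid\bot\mid\varphi\to\varphi\mid\langle\mathsf s\rangle\varphi\mid\langle\mathsf t\rangle\varphi$ with standard Boolean abbreviations ($\neg,\top,\wedge,\vee,\leftrightarrow$), $[\mathsf s]\varphi:=\neg\langle\mathsf s\rangle\neg\varphi$, $[\mathsf t]\varphi:=\neg\langle\mathsf t\rangle\neg\varphi$, $\langle\mathsf t\rangle^0\varphi=\varphi$, $\langle\mathsf t\rangle^{i+1}\varphi=\langle\mathsf t\rangle\langle\mathsf t\rangle^{i}\varphi$. Satisfaction at $q\in Q_n$: $p$ iff $p\in V(q)$; $\bot$ never; $\to$ classical; $\langle\mathsf s\rangle\psi$ iff some $q'\in Q_{n+1}$ and $1\le i\le n+1$ have $s_i(q')=q$ and $q'\models\psi$; $\langle\mathsf t\rangle\psi$ iff some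 $1\le i\le n$ has $t_i(q)\models\psi$. For $i\ge1$, $\langle\mathsf t\rangle(i)$ denotes any formula $\bigwedge_{j=1}^{i}\langle\mathsf t\rangle\beta_j$ where $\beta_1,\dots,\beta_i$ are propositional formulas (over atomic propositions, $\bot$, $\to$) such that $\beta_j\wedge\beta_k$ is a propositional contradiction for $j\ne k$ (e.g. $\langle\mathsf t\rangle p\wedge\langle\mathsf t\rangle\neg p$ for $i=2$). The system HDML-AX has axioms: (A1) all instances of propositional tautologies; (A2) $\langle\mathsf s\rangle\bot\leftrightarrow\bot$ and $\langle\mathsf t\rangle\bot\leftrightarrow\bot$; (A3) $\langle\mathsf s\rangle(\varphi\vee\varphi')\leftrightarrow\langle\mathsf s\rangle\varphi\vee\langle\mathsf s\rangle\varphi'$ and the same for $\langle\mathsf t\rangle$; (A4) $[\mathsf s]\varphi\leftrightarrow\neg\langle\mathsf s\rangle\neg\varphi$ and $[\mathsf t]\varphi\leftrightarrow\neg\langle\mathsf t\rangle\neg\varphi$; (A5) $\langle\mathsf t\rangle(i)\to\langle\mathsf t\rangle^i\top$ for all $i\ge1$; (A6) $\langle\mathsf t\rangle^2\top\to(\langle\mathsf t\rangle[\mathsf t]\varphi\to[\mathsf t]\langle\mathsf t\rangle\varphi)$; (A7) $\langle\mathsf s\rangle[\mathsf t]\varphi\to[\mathsf t]\langle\mathsf s\rangle\varphi$ and $\langle\mathsf t\rangle[\mathsf s]\varphi\to[\mathsf s]\langle\mathsf t\rangle\varphi$; (A8) $\langle\mathsf s\rangle\langle\mathsf t\rangle^i\top\to[\mathsf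 s]\langle\mathsf t\rangle^i\top$ and $\langle\mathsf t\rangle\langle\mathsf t\rangle^i\top\to[\mathsf t]\langle\mathsf t\rangle^i\top$ for all $i\ge0$; (A9) $\langle\mathsf t\rangle^i\top\to[\mathsf s]\langle\mathsf t\rangle\langle\mathsf t\rangle^i\top$ and $\langle\mathsf s\rangle\langle\mathsf t\rangle\langle\mathsf t\rangle^i\top\to\langle\mathsf t\rangle^i\top$ for all $i\ge0$; (A10) $\langle\mathsf s\rangle\langle\mathsf s\rangle\langle\mathsf t\rangle\varphi\to\langle\mathsf s\rangle\langle\mathsf t\rangle\langle\mathsf s\rangle\varphi$ and $\langle\mathsf s\rangle\langle\mathsf t\rangle\langle\mathsf t\rangle\varphi\to\langle\mathsf t\rangle\langle\mathsf s\rangle\langle\mathsf t\rangle\varphi$. Rules: modus ponens; from $\varphi\to\varphi'$ infer $\langle\mathsf s\rangle\varphi\to\langle\mathsf s\rangle\varphi'$; from $\varphi\to\varphi'$ infer $\langle\mathsf t\rangle\varphi\to\langle\mathsf t\rangle\varphi'$; uniform substitution of formulas for atomic propositions. $\vdash\varphi$ means $\varphi$ is derivable. *)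

theory Defs
  imports Main
begin

datatype 'p fm =
    Atom 'p
  | Bot
  | Imp "'p fm" "'p fm"
  | Dia_s "'p fm"
  | Dia_t "'p fm"

definition Neg :: "'p fm \<Rightarrow> 'p fm" where "Neg a = Imp a Bot"
definition Top :: "'p fm" where "Top = Neg Bot"
definition Disj :: "'p fm \<Rightarrow> 'p fm \<Rightarrow> 'p fm" where "Disj a b = Imp (Neg a) b"
definition Conj :: "'p fm \<Rightarrow> 'p fm \<Rightarrow> 'p fm" where "Conj a b = Neg (Imp a (Neg b))"
definition Iff :: "'p fm \<Rightarrow> 'p fm \<Rightarrow> 'p fm" where "Iff a b = Conj (Imp a b) (Imp b a)"
definition Box_s :: "'p fm \<Rightarrow> 'p fm" where "Box_s a = Neg (Dia_s (Neg a))"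
definition Box_t :: "'p fm \<Rightarrow> 'p fm" where "Box_t a = Neg (Dia_t (Neg a))"

primrec Tpow :: "nat \<Rightarrow> 'p fm \<Rightarrow> 'p fm" where
  "Tpow 0 a = a"
| "Tpow (Suc i) a = Dia_t (Tpow i a)"

fun ConjList :: "'p fm list \<Rightarrow> 'p fm" where
  "ConjList [] = Top"
| "ConjList [a] = a"
| "ConjList (a # as) = Conj a (ConjList as)"

primrec is_prop :: "'p fm \<Rightarrow> bool" where
  "is_prop (Atom p) = True"
| "is_prop Bot = True"
| "is_prop (Imp a b) = (is_prop a \<and> is_prop b)"
| "is_prop (Dia_s a) = False"
| "is_prop (Dia_t a) = False"

primrec peval :: "('p \<Rightarrow> bool) \<Rightarrow> 'p fm \<Rightarrow> bool" where
  "peval v (Atom p) = v p"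
| "peval v Bot = False"
| "peval v (Imp a b) = (peval v a \<longrightarrow> peval v b)"
| "peval v (Dia_s a) = False"
| "peval v (Dia_t a) = False"

definition prop_contradiction :: "'p fm \<Rightarrow> bool" where
  "prop_contradiction a \<longleftrightarrow> is_prop a \<and> (\<forall>v. \<not> peval v a)"

text \<open>Evaluation treating every modal subformula (and every atom) as an
  independent propositional variable; a formula is an instance of a
  propositional tautology iff this is true under every such valuation.\<close>
primrec skel_eval :: "('p fm \<Rightarrow> bool) \<Rightarrow> 'p fm \<Rightarrow> bool" where
  "skel_eval v (Atom p) = v (Atom p)"
| "skel_eval v Bot = False"
| "skel_eval v (Imp a b) = (skel_eval v a \<longrightarrow> skel_eval v b)"
| "skel_eval v (Dia_s a) = v (Dia_s a)"
| "skel_eval v (Dia_t a) = v (Dia_t a)"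

definition taut_instance :: "'p fm \<Rightarrow> bool" where
  "taut_instance a \<longleftrightarrow> (\<forall>v. skel_eval v a)"

definition t_i_formula :: "nat \<Rightarrow> 'p fm \<Rightarrow> bool" where
  "t_i_formula i a \<longleftrightarrow> (\<exists>bs. length bs = i \<and> i \<ge> 1 \<and> (\<forall>b\<in>set bs. is_prop b) \<and>
      (\<forall>j<i. \<forall>k<i. j \<noteq> k \<longrightarrow> prop_contradiction (Conj (bs ! j) (bs ! k))) \<and>
      a = ConjList (map Dia_t bs))"

primrec subst :: "('p \<Rightarrow> 'p fm) \<Rightarrow> 'p fm \<Rightarrow> 'p fm" where
  "subst \<sigma> (Atom p) = \<sigma> p"
| "subst \<sigma> Bot = Bot"
| "subst \<sigma> (Imp a b) = Imp (subst \<sigma> a) (subst \<sigma> b)"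
| "subst \<sigma> (Dia_s a) = Dia_s (subst \<sigma> a)"
| "subst \<sigma> (Dia_t a) = Dia_t (subst \<sigma> a)"

inductive derivable :: "'p fm \<Rightarrow> bool" where
  A1: "taut_instance a \<Longrightarrow> derivable a"
| A2s: "derivable (Iff (Dia_s Bot) Bot)"
| A2t: "derivable (Iff (Dia_t Bot) Bot)"
| A3s: "derivable (Iff (Dia_s (Disj a b)) (Disj (Dia_s a) (Dia_s b)))"
| A3t: "derivable (Iff (Dia_t (Disj a b)) (Disj (Dia_t a) (Dia_t b)))"
| A4s: "derivable (Iff (Box_s a) (Neg (Dia_s (Neg a))))"
| A4t: "derivable (Iff (Box_t a) (Neg (Dia_t (Neg a))))"
| A5: "i \<ge> 1 \<Longrightarrow> t_i_formula i c \<Longrightarrow> derivable (Imp c (Tpow i Top))"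
| A6: "derivable (Imp (Tpow 2 Top) (Imp (Dia_t (Box_t a)) (Box_t (Dia_t a))))"
| A7a: "derivable (Imp (Dia_s (Box_t a)) (Box_t (Dia_s a)))"
| A7b: "derivable (Imp (Dia_t (Box_s a)) (Box_s (Dia_t a)))"
| A8a: "derivable (Imp (Dia_s (Tpow i Top)) (Box_s (Tpow i Top)))"
| A8b: "derivable (Imp (Dia_t (Tpow i Top)) (Box_t (Tpow i Top)))"
| A9a: "derivable (Imp (Tpow i Top) (Box_s (Dia_t (Tpow i Top))))"
| A9b: "derivable (Imp (Dia_s (Dia_t (Tpow i Top))) (Tpow i Top))"
| A10a: "derivable (Imp (Dia_s (Dia_s (Dia_t a))) (Dia_s (Dia_t (Dia_s a))))"
| A10b: "derivable (Imp (Dia_s (Dia_t (Dia_t a))) (Dia_t (Dia_s (Dia_t a))))"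
| MP: "derivable (Imp a b) \<Longrightarrow> derivable a \<Longrightarrow> derivable b"
| Mono_s: "derivable (Imp a b) \<Longrightarrow> derivable (Imp (Dia_s a) (Dia_s b))"
| Mono_t: "derivable (Imp a b) \<Longrightarrow> derivable (Imp (Dia_t a) (Dia_t b))"
| Subst: "derivable a \<Longrightarrow> derivable (subst \<sigma> a)"

text \<open>cells n = Q_n; sface i = s_i and tface i = t_i (one map per index i,
  acting on all dimensions, which is unambiguous since the Q_n are disjoint);
  lab = l (only relevant on Q_1); val = V.\<close>
record ('c, 'l, 'p) hdml =
  cells :: "nat \<Rightarrow> 'c set"
  sface :: "nat \<Rightarrow> 'c \<Rightarrow> 'c"
  tface :: "nat \<Rightarrow> 'c \<Rightarrow> 'c"
  lab :: "'c \<Rightarrow> 'l"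
  val :: "'c \<Rightarrow> 'p set"

definition cubical_set :: "('c, 'l, 'p) hdml \<Rightarrow> bool" where
  "cubical_set M \<longleftrightarrow>
     (\<forall>m n. m \<noteq> n \<longrightarrow> cells M m \<inter> cells M n = {}) \<and>
     (\<forall>n q i. n \<ge> 1 \<longrightarrow> q \<in> cells M n \<longrightarrow> 1 \<le> i \<longrightarrow> i \<le> n \<longrightarrow>
        sface M i q \<in> cells M (n - 1) \<and> tface M i q \<in> cells M (n - 1)) \<and>
     (\<forall>n q i j. q \<in> cells M n \<longrightarrow> 1 \<le> i \<longrightarrow> i < j \<longrightarrow> j \<le> n \<longrightarrow>
        (\<forall>\<alpha>\<in>{sface M, tface M}. \<forall>\<beta>\<in>{sface M, tface M}.
           \<alpha> i (\<beta> j q) = \<beta> (j - 1) (\<alpha> i q)))"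

definition hdml_model :: "('c, 'l, 'p) hdml \<Rightarrow> bool" where
  "hdml_model M \<longleftrightarrow> cubical_set M \<and>
     (\<forall>q\<in>cells M 2. \<forall>i\<in>{1, 2}. lab M (sface M i q) = lab M (tface M i q))"

text \<open>Satisfaction at a cell q of dimension n (intended: q \<in> cells M n).\<close>
primrec sat :: "('c, 'l, 'p) hdml \<Rightarrow> nat \<Rightarrow> 'c \<Rightarrow> 'p fm \<Rightarrow> bool" where
  "sat M n q (Atom p) = (p \<in> val M q)"
| "sat M n q Bot = False"
| "sat M n q (Imp a b) = (sat M n q a \<longrightarrow> sat M n q b)"
| "sat M n q (Dia_s a) = (\<exists>q'\<in>cells M (Suc n). \<exists>i. 1 \<le> i \<and> i \<le> Suc n \<and>
      sface M i q' = q \<and> sat M (Suc n) q' a)"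
| "sat M n q (Dia_t a) = (\<exists>i. 1 \<le> i \<and> i \<le> n \<and> sat M (n - 1) (tface M i q) a)"

end

theory Submission
  imports Defs
begin

text \<open>The real work lies in the cubical axioms A6, A7 and A10,
  which all reduce to one combinatorial fact about cubical sets: two faces taken
  in different coordinates commute up to reindexing,
  \<open>\<alpha>\<^sub>j' (\<beta>\<^sub>j q) = \<beta>\<^sub>i' (\<alpha>\<^sub>i q)\<close>, where \<open>i'\<close>, \<open>j'\<close> are the positions of
  the coordinates \<open>i\<close>, \<open>j\<close> after the other one has been removed (\<open>face_swap\<close>).  The counting axiom A5 uses that
  pairwise contradictory propositional formulas must hold at distinct target
  faces, and uniform substitution is handled by changing the valuation.\<close>

lemma sat_Neg [simp]: "sat M n q (Neg a) = (\<not> sat M n q a)"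
  by (simp add: Neg_def)

lemma sat_Top [simp]: "sat M n q Top"
  by (simp add: Top_def)

lemma sat_Disj [simp]: "sat M n q (Disj a b) = (sat M n q a \<or> sat M n q b)"
  by (auto simp add: Disj_def)

lemma sat_Conj [simp]: "sat M n q (Conj a b) = (sat M n q a \<and> sat M n q b)"
  by (auto simp add: Conj_def)

lemma sat_Iff [simp]: "sat M n q (Iff a b) = (sat M n q a = sat M n q b)"
  by (auto simp add: Iff_def)

lemma sat_Box_s [simp]:
  "sat M n q (Box_s a) = (\<forall>q'\<in>cells M (Suc n). \<forall>i. 1 \<le> i \<and> i \<le> Suc n \<and>
      sface M i q' = q \<longrightarrow> sat M (Suc n) q' a)"
  by (auto simp add: Box_s_def)

lemma sat_Box_t [simp]:
  "sat M n q (Box_t a) = (\<forall>i. 1 \<le> i \<and> i \<le> n \<longrightarrow> sat M (n - 1) (tface M i q) a)"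
  by (auto simp add: Box_t_def)

lemma sat_Dia_sI:
  "q' \<in> cells M (Suc n) \<Longrightarrow> 1 \<le> i \<Longrightarrow> i \<le> Suc n \<Longrightarrow> sface M i q' = q \<Longrightarrow>
    sat M (Suc n) q' a \<Longrightarrow> sat M n q (Dia_s a)"
  by auto

lemma sat_Dia_tI:
  "1 \<le> i \<Longrightarrow> i \<le> n \<Longrightarrow> sat M (n - 1) (tface M i q) a \<Longrightarrow> sat M n q (Dia_t a)"
  by auto

lemma sat_ConjList: "sat M n q (ConjList xs) = (\<forall>x\<in>set xs. sat M n q x)"
  by (induction xs rule: ConjList.induct) auto

lemma sat_prop: "is_prop b \<Longrightarrow> sat M n q b = peval (\<lambda>p. p \<in> val M q) b"
  by (induction b) auto

text \<open>Satisfaction is a valuation in the sense of \<open>taut_instance\<close>, so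
  instances of tautologies are true everywhere (axiom A1).\<close>
lemma skel_eval_sat: "skel_eval (sat M n q) a = sat M n q a"
  by (induction a) auto

section \<open>Cubical geometry\<close>

lemma faces:
  assumes "hdml_model M" "q \<in> cells M n" "1 \<le> i" "i \<le> n"
  shows "sface M i q \<in> cells M (n - 1)" "tface M i q \<in> cells M (n - 1)"
  using assms unfolding hdml_model_def cubical_set_def by auto

lemma cells_disjoint: "hdml_model M \<Longrightarrow> q \<in> cells M m \<Longrightarrow> q \<in> cells M n \<Longrightarrow> m = n"
  unfolding hdml_model_def cubical_set_def by blast

lemma cubical_identity:
  assumes "hdml_model M" "q \<in> cells M n" "1 \<le> i" "i < j" "j \<le> n"
    "\<alpha> \<in> {sface M, tface M}" "\<beta> \<in> {sface M, tface M}"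
  shows "\<alpha> i (\<beta> j q) = \<beta> (j - 1) (\<alpha> i q)"
  using assms unfolding hdml_model_def cubical_set_def by blast

text \<open>The position of coordinate \<open>j\<close> of an \<open>n\<close>-cube once coordinate \<open>i \<noteq> j\<close>
  has been removed by taking a face in direction \<open>i\<close>.\<close>
definition reindex :: "nat \<Rightarrow> nat \<Rightarrow> nat" where
  "reindex i j = (if j < i then j else j - 1)"

lemma reindex_bounds:
  "1 \<le> i \<Longrightarrow> i \<le> n \<Longrightarrow> 1 \<le> j \<Longrightarrow> j \<le> n \<Longrightarrow> i \<noteq> j \<Longrightarrow>
    1 \<le> reindex i j \<and> reindex i j \<le> n - 1"
  unfolding reindex_def by auto

lemma reindex_surj:
  assumes "1 \<le> i" "i \<le> n" "1 \<le> k" "k \<le> n - 1"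
  obtains j where "1 \<le> j" "j \<le> n" "j \<noteq> i" "reindex i j = k"
  using assms by (intro that[of "if k < i then k else Suc k"]) (auto simp: reindex_def)

lemma face_swap:
  assumes M: "hdml_model M" and q: "q \<in> cells M n"
    and \<alpha>: "\<alpha> \<in> {sface M, tface M}" and \<beta>: "\<beta> \<in> {sface M, tface M}"
    and ij: "1 \<le> i" "i \<le> n" "1 \<le> j" "j \<le> n" "i \<noteq> j"
  shows "\<alpha> (reindex j i) (\<beta> j q) = \<beta> (reindex i j) (\<alpha> i q)"
proof (cases "i < j")
  case True
  then show ?thesis
    using cubical_identity[OF M q ij(1) True ij(4) \<alpha> \<beta>] by (simp add: reindex_def)
next
  case False
  then have "j < i" using ij(5) by simp
  then show ?thesis
    using cubical_identity[OF M q ij(3) _ ij(2) \<beta> \<alpha>] by (simp add: reindex_def)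
qed

lemma common_tface:
  assumes M: "hdml_model M" and q: "q \<in> cells M n" and n: "2 \<le> n"
    and i: "1 \<le> i" "i \<le> n" and k: "1 \<le> k" "k \<le> n"
  obtains j l where "1 \<le> j" "j \<le> n - 1" "1 \<le> l" "l \<le> n - 1"
    "tface M j (tface M i q) = tface M l (tface M k q)"
proof (cases "i = k")
  case True
  then show ?thesis using n by (intro that[of 1 1]) auto
next
  case False
  show ?thesis
    using face_swap[OF M q _ _ i k False, where \<alpha> = "tface M" and \<beta> = "tface M"]
      reindex_bounds[OF i k False] reindex_bounds[OF k i] False
    by (intro that[of "reindex i k" "reindex k i"]) auto
qed

lemma tface_sface_exchange:
  assumes M: "hdml_model M" and q: "q \<in> cells M n"
    and i: "1 \<le> i" "i \<le> n" and k: "1 \<le> k" "k \<le> n - 1"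
  obtains j l where "1 \<le> j" "j \<le> n" "1 \<le> l" "l \<le> n - 1"
    "tface M k (sface M i q) = sface M l (tface M j q)"
proof -
  obtain j where j: "1 \<le> j" "j \<le> n" "j \<noteq> i" "reindex i j = k"
    using reindex_surj[OF i k] .
  show ?thesis
    using face_swap[OF M q _ _ j(1,2) i j(3), where \<alpha> = "tface M" and \<beta> = "sface M"]
      reindex_bounds[OF j(1,2) i] j
    by (intro that[of j "reindex j i"]) auto
qed

lemma double_face_avoid:
  assumes M: "hdml_model M" and q: "q \<in> cells M n" and \<alpha>: "\<alpha> \<in> {sface M, tface M}"
    and j: "1 \<le> j" "j \<le> n" and k: "1 \<le> k" "k \<le> n - 1"
  obtains j' k' where "1 \<le> j'" "j' \<le> n" "j' \<noteq> c" "1 \<le> k'" "k' \<le> n - 1"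
    "\<alpha> k (\<alpha> j q) = \<alpha> k' (\<alpha> j' q)"
proof (cases "j = c")
  case False
  then show ?thesis using j k by (intro that[of j k]) auto
next
  case True
  obtain j' where j': "1 \<le> j'" "j' \<le> n" "j' \<noteq> j" "reindex j j' = k"
    using reindex_surj[OF j k] .
  show ?thesis
    using face_swap[OF M q \<alpha> \<alpha> j'(1,2) j j'(3)] reindex_bounds[OF j'(1,2) j] j' True
    by (intro that[of j' "reindex j' j"]) auto
qed

lemma sat_Tpow:
  "hdml_model M \<Longrightarrow> q \<in> cells M n \<Longrightarrow> sat M n q (Tpow i Top) = (i \<le> n)"
proof (induction i arbitrary: n q)
  case 0
  then show ?case by simp
next
  case (Suc i)
  have "sat M n q (Tpow (Suc i) Top) = (\<exists>j. 1 \<le> j \<and> j \<le> n \<and> i \<le> n - 1)"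
    using Suc faces(2)[OF Suc.prems] by auto
  also have "\<dots> = (Suc i \<le> n)" by auto
  finally show ?case .
qed

text \<open>Truth at every cell of a fixed model.  Validity is relative to one model
  because the substitution rule changes only the valuation.\<close>
definition valid_in :: "('c, 'l, 'p) hdml \<Rightarrow> 'p fm \<Rightarrow> bool" where
  "valid_in M \<phi> \<longleftrightarrow> (\<forall>n q. q \<in> cells M n \<longrightarrow> sat M n q \<phi>)"

lemma valid_inI: "(\<And>n q. q \<in> cells M n \<Longrightarrow> sat M n q \<phi>) \<Longrightarrow> valid_in M \<phi>"
  by (simp add: valid_in_def)

lemma valid_inD: "valid_in M \<phi> \<Longrightarrow> q \<in> cells M n \<Longrightarrow> sat M n q \<phi>"
  by (simp add: valid_in_def)

text \<open>A5: if pairwise contradictory \<open>\<beta>\<^sub>1, \<dots>, \<beta>\<^sub>i\<close> hold at target faces of \<open>q\<close>,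
  these faces are pairwise distinct, so \<open>q\<close> has at least \<open>i\<close> target faces.\<close>
lemma t_i_formula_dimension:
  assumes ti: "t_i_formula i c" and s: "sat M n q c"
  shows "i \<le> n"
proof -
  obtain bs where len: "length bs = i" and props: "\<forall>b\<in>set bs. is_prop b"
    and contr: "\<forall>j<i. \<forall>k<i. j \<noteq> k \<longrightarrow> prop_contradiction (Conj (bs ! j) (bs ! k))"
    and c: "c = ConjList (map Dia_t bs)"
    using ti unfolding t_i_formula_def by blast
  have "\<forall>j<i. \<exists>k. 1 \<le> k \<and> k \<le> n \<and> sat M (n - 1) (tface M k q) (bs ! j)"
    using s c len by (auto simp: sat_ConjList)
  then obtain f where f: "\<And>j. j < i \<Longrightarrow> 1 \<le> f j \<and> f j \<le> n \<and> sat M (n - 1) (tface M (f j) q) (bs ! j)"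
    by (metis (no_types))
  have inj: "inj_on f {..<i}"
  proof (rule inj_onI)
    fix j k assume j: "j \<in> {..<i}" and k: "k \<in> {..<i}" and e: "f j = f k"
    show "j = k"
    proof (rule ccontr)
      assume "j \<noteq> k"
      let ?v = "\<lambda>p. p \<in> val M (tface M (f j) q)"
      have "\<not> peval ?v (Conj (bs ! j) (bs ! k))"
        using contr j k \<open>j \<noteq> k\<close> unfolding prop_contradiction_def by simp
      moreover have "is_prop (bs ! j)" "is_prop (bs ! k)" using props j k len by auto
      then have "peval ?v (bs ! j)" "peval ?v (bs ! k)"
        using f[of j] f[of k] j k e by (simp_all add: sat_prop)
      ultimately show False by (simp add: Conj_def Neg_def)
    qed
  qed
  have "f ` {..<i} \<subseteq> {1..n}" using f by auto
  from card_inj_on_le[OF inj this] show ?thesis by simp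
qed

lemma valid_A5:
  assumes ti: "t_i_formula i c" and M: "hdml_model M"
  shows "valid_in M (Imp c (Tpow i Top))"
  unfolding valid_in_def using t_i_formula_dimension[OF ti] sat_Tpow[OF M] by auto

text \<open>A6: if some target face of \<open>q\<close> has all its target faces satisfying \<open>a\<close>,
  then every target face of \<open>q\<close> shares one of these (\<open>common_tface\<close>).\<close>
lemma valid_A6:
  assumes M: "hdml_model M"
  shows "valid_in M (Imp (Tpow 2 Top) (Imp (Dia_t (Box_t a)) (Box_t (Dia_t a))))"
proof (rule valid_inI)
  fix n q assume q: "q \<in> cells M n"
  have "sat M (n - 1) (tface M k q) (Dia_t a)"
    if n: "2 \<le> n" and i: "1 \<le> i" "i \<le> n"
      and box: "\<forall>j. 1 \<le> j \<and> j \<le> n - 1 \<longrightarrow> sat M (n - 1 - 1) (tface M j (tface M i q)) a"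
      and k: "1 \<le> k" "k \<le> n" for i k
  proof -
    obtain j l where j: "1 \<le> j" "j \<le> n - 1" and l: "1 \<le> l" "l \<le> n - 1"
      and e: "tface M j (tface M i q) = tface M l (tface M k q)"
      using common_tface[OF M q n i k] .
    have "sat M (n - 1 - 1) (tface M l (tface M k q)) a" using box j e by metis
    then show ?thesis using l by auto
  qed
  then show "sat M n q (Imp (Tpow 2 Top) (Imp (Dia_t (Box_t a)) (Box_t (Dia_t a))))"
    by (auto simp: sat_Tpow[OF M q])
qed

text \<open>A7: the target faces of a source face \<open>s\<^sub>i q'\<close> are source faces of
  target faces of \<open>q'\<close> (\<open>tface_sface_exchange\<close>); this gives both halves.\<close>
lemma valid_A7a:
  assumes M: "hdml_model M"
  shows "valid_in M (Imp (Dia_s (Box_t a)) (Box_t (Dia_s a)))"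
proof (rule valid_inI)
  fix n q
  have "sat M (n - 1) (tface M k (sface M i q')) (Dia_s a)"
    if q': "q' \<in> cells M (Suc n)" and i: "1 \<le> i" "i \<le> Suc n"
      and box: "\<forall>j. 1 \<le> j \<and> j \<le> Suc n \<longrightarrow> sat M n (tface M j q') a"
      and k: "1 \<le> k" "k \<le> n" for q' i k
  proof -
    obtain j l where j: "1 \<le> j" "j \<le> Suc n" and l: "1 \<le> l" "l \<le> n"
      and e: "tface M k (sface M i q') = sface M l (tface M j q')"
      using tface_sface_exchange[OF M q' i, of k] k by auto
    have "tface M j q' \<in> cells M n" using faces(2)[OF M q' j] by simp
    then have "\<exists>r\<in>cells M n. \<exists>l. 1 \<le> l \<and> l \<le> n \<and>
        sface M l r = tface M k (sface M i q') \<and> sat M n r a"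
      using e j l box by auto
    moreover have "Suc (n - 1) = n" using k by simp
    ultimately show ?thesis by simp
  qed
  then show "sat M n q (Imp (Dia_s (Box_t a)) (Box_t (Dia_s a)))" by auto
qed

lemma valid_A7b:
  assumes M: "hdml_model M"
  shows "valid_in M (Imp (Dia_t (Box_s a)) (Box_s (Dia_t a)))"
proof (rule valid_inI)
  fix n q
  have "sat M (Suc n) q' (Dia_t a)"
    if i: "1 \<le> i" "i \<le> n"
      and box: "\<forall>r\<in>cells M n. \<forall>l. 1 \<le> l \<and> l \<le> n \<and> sface M l r = tface M i q \<longrightarrow> sat M n r a"
      and q': "q' \<in> cells M (Suc n)" and k: "1 \<le> k" "k \<le> Suc n" "sface M k q' = q" for i q' k
  proof -
    obtain j l where j: "1 \<le> j" "j \<le> Suc n" and l: "1 \<le> l" "l \<le> n"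
      and e: "tface M i (sface M k q') = sface M l (tface M j q')"
      using tface_sface_exchange[OF M q' k(1,2), of i] i by auto
    have "tface M j q' \<in> cells M n" using faces(2)[OF M q' j] by simp
    then show ?thesis using box e j l k by auto
  qed
  moreover have "Suc (n - 1) = n" if "1 \<le> i" "i \<le> n" for i using that by simp
  ultimately show "sat M n q (Imp (Dia_t (Box_s a)) (Box_s (Dia_t a)))" by fastforce
qed

text \<open>A8 and A9 only say that faces and cofaces have the expected dimension.\<close>
lemma valid_A8a:
  assumes M: "hdml_model M"
  shows "valid_in M (Imp (Dia_s (Tpow i Top)) (Box_s (Tpow i Top)))"
proof (rule valid_inI)
  fix n q
  have "\<And>q'. q' \<in> cells M (Suc n) \<Longrightarrow> sat M (Suc n) q' (Tpow i Top) = (i \<le> Suc n)"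
    using sat_Tpow[OF M] .
  then show "sat M n q (Imp (Dia_s (Tpow i Top)) (Box_s (Tpow i Top)))" by auto
qed

lemma valid_A8b:
  assumes M: "hdml_model M"
  shows "valid_in M (Imp (Dia_t (Tpow i Top)) (Box_t (Tpow i Top)))"
proof (rule valid_inI)
  fix n q assume q: "q \<in> cells M n"
  have "\<And>j. 1 \<le> j \<Longrightarrow> j \<le> n \<Longrightarrow> sat M (n - 1) (tface M j q) (Tpow i Top) = (i \<le> n - 1)"
    using sat_Tpow[OF M faces(2)[OF M q]] .
  then show "sat M n q (Imp (Dia_t (Tpow i Top)) (Box_t (Tpow i Top)))" by auto
qed

lemma valid_A9a:
  assumes M: "hdml_model M"
  shows "valid_in M (Imp (Tpow i Top) (Box_s (Dia_t (Tpow i Top))))"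
proof (rule valid_inI)
  fix n q assume q: "q \<in> cells M n"
  have "sat M (Suc n) q' (Dia_t (Tpow i Top))" if "q' \<in> cells M (Suc n)" "i \<le> n" for q'
    using sat_Tpow[OF M that(1), of "Suc i"] that(2) by simp
  then show "sat M n q (Imp (Tpow i Top) (Box_s (Dia_t (Tpow i Top))))"
    using sat_Tpow[OF M q] by auto
qed

lemma valid_A9b:
  assumes M: "hdml_model M"
  shows "valid_in M (Imp (Dia_s (Dia_t (Tpow i Top))) (Tpow i Top))"
proof (rule valid_inI)
  fix n q assume q: "q \<in> cells M n"
  have "i \<le> n" if "q' \<in> cells M (Suc n)" "sat M (Suc n) q' (Dia_t (Tpow i Top))" for q'
    using sat_Tpow[OF M that(1), of "Suc i"] that(2) by simp
  then show "sat M n q (Imp (Dia_s (Dia_t (Tpow i Top))) (Tpow i Top))"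
    using sat_Tpow[OF M q] by auto
qed

text \<open>A10a: from \<open>s\<^sub>i s\<^sub>j q\<^sub>2\<close> with \<open>a\<close> at \<open>t\<^sub>k q\<^sub>2\<close>, rewrite the double
  source face so that its first face \<open>s\<^sub>b\<close> avoids coordinate \<open>k\<close>; then
  \<open>s\<^sub>b q\<^sub>2\<close> and \<open>t\<^sub>k q\<^sub>2\<close> share a face by \<open>face_swap\<close>.\<close>
lemma valid_A10a:
  assumes M: "hdml_model M"
  shows "valid_in M (Imp (Dia_s (Dia_s (Dia_t a))) (Dia_s (Dia_t (Dia_s a))))"
proof (rule valid_inI)
  fix n q
  have "sat M n (sface M i (sface M j q2)) (Dia_s (Dia_t (Dia_s a)))"
    if q2: "q2 \<in> cells M (Suc (Suc n))" and i: "1 \<le> i" "i \<le> Suc n"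
      and j: "1 \<le> j" "j \<le> Suc (Suc n)" and k: "1 \<le> k" "k \<le> Suc (Suc n)"
      and s: "sat M (Suc n) (tface M k q2) a" for q2 i j k
  proof -
    obtain b l where b: "1 \<le> b" "b \<le> Suc (Suc n)" "b \<noteq> k" and l: "1 \<le> l" "l \<le> Suc n"
      and e: "sface M i (sface M j q2) = sface M l (sface M b q2)"
      using double_face_avoid[OF M q2 _ j, of "sface M" i k] i by auto
    have swap: "tface M (reindex b k) (sface M b q2) = sface M (reindex k b) (tface M k q2)"
      using face_swap[OF M q2 _ _ b(1,2) k b(3), where \<alpha> = "sface M" and \<beta> = "tface M"]
      by simp
    have cells: "sface M b q2 \<in> cells M (Suc n)" "tface M k q2 \<in> cells M (Suc n)"
      using faces[OF M q2] b k by auto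
    have "sat M n (tface M (reindex b k) (sface M b q2)) (Dia_s a)"
      by (rule sat_Dia_sI[OF cells(2) _ _ swap[symmetric] s])
        (use reindex_bounds[OF k b(1,2)] b(3) in auto)
    then have "sat M (Suc n) (sface M b q2) (Dia_t (Dia_s a))"
      by (intro sat_Dia_tI[where i = "reindex b k"])
        (use reindex_bounds[OF b(1,2) k] b(3) in \<open>auto simp del: sat.simps\<close>)
    then show ?thesis by (rule sat_Dia_sI[OF cells(1) l e[symmetric]])
  qed
  then show "sat M n q (Imp (Dia_s (Dia_s (Dia_t a))) (Dia_s (Dia_t (Dia_s a))))" by auto
qed

text \<open>A10b: dually, rewrite the double target face \<open>t\<^sub>k t\<^sub>j q\<^sub>1\<close> so that its
  first face \<open>t\<^sub>b\<close> avoids the source coordinate \<open>i\<close>.\<close>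
lemma valid_A10b:
  assumes M: "hdml_model M"
  shows "valid_in M (Imp (Dia_s (Dia_t (Dia_t a))) (Dia_t (Dia_s (Dia_t a))))"
proof (rule valid_inI)
  fix n q
  have "sat M n (sface M i q1) (Dia_t (Dia_s (Dia_t a)))"
    if q1: "q1 \<in> cells M (Suc n)" and i: "1 \<le> i" "i \<le> Suc n"
      and j: "1 \<le> j" "j \<le> Suc n" and k: "1 \<le> k" "k \<le> n"
      and s: "sat M (n - 1) (tface M k (tface M j q1)) a" for q1 i j k
  proof -
    obtain b l where b: "1 \<le> b" "b \<le> Suc n" "b \<noteq> i" and l: "1 \<le> l" "l \<le> n"
      and e: "tface M k (tface M j q1) = tface M l (tface M b q1)"
      using double_face_avoid[OF M q1 _ j, of "tface M" k i] k by auto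
    have swap: "sface M (reindex b i) (tface M b q1) = tface M (reindex i b) (sface M i q1)"
      using face_swap[OF M q1 _ _ b(1,2) i b(3), where \<alpha> = "tface M" and \<beta> = "sface M"]
      by simp
    have cell: "tface M b q1 \<in> cells M n" using faces(2)[OF M q1 b(1,2)] by simp
    have n: "Suc (n - 1) = n" using b i by auto
    have "sat M n (tface M b q1) (Dia_t a)"
      by (rule sat_Dia_tI[OF l]) (use e s in \<open>simp del: sat.simps\<close>)
    then have "sat M (n - 1) (tface M (reindex i b) (sface M i q1)) (Dia_s (Dia_t a))"
      by (intro sat_Dia_sI[where q' = "tface M b q1" and i = "reindex b i"])
        (use swap cell reindex_bounds[OF b(1,2) i] b(3) n in \<open>auto simp del: sat.simps\<close>)
    then show ?thesis
      by (intro sat_Dia_tI[where i = "reindex i b"])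
        (use reindex_bounds[OF i b(1,2)] b(3) in \<open>auto simp del: sat.simps\<close>)
  qed
  then show "sat M n q (Imp (Dia_s (Dia_t (Dia_t a))) (Dia_t (Dia_s (Dia_t a))))" by auto
qed

lemma valid_MP: "valid_in M (Imp a b) \<Longrightarrow> valid_in M a \<Longrightarrow> valid_in M b"
  by (simp add: valid_in_def)

lemma valid_mono_s:
  assumes ab: "valid_in M (Imp a b)"
  shows "valid_in M (Imp (Dia_s a) (Dia_s b))"
proof (rule valid_inI)
  fix n q
  have "sat M (Suc n) q' b" if "q' \<in> cells M (Suc n)" "sat M (Suc n) q' a" for q'
    using valid_inD[OF ab that(1)] that(2) by simp
  then show "sat M n q (Imp (Dia_s a) (Dia_s b))" by auto
qed

lemma valid_mono_t:
  assumes M: "hdml_model M" and ab: "valid_in M (Imp a b)"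
  shows "valid_in M (Imp (Dia_t a) (Dia_t b))"
proof (rule valid_inI)
  fix n q assume q: "q \<in> cells M n"
  have "sat M (n - 1) (tface M i q) b"
    if "1 \<le> i" "i \<le> n" "sat M (n - 1) (tface M i q) a" for i
    using valid_inD[OF ab faces(2)[OF M q that(1,2)]] that(3) by simp
  then show "sat M n q (Imp (Dia_t a) (Dia_t b))" by auto
qed

section \<open>Uniform substitution\<close>

definition subst_model :: "('c, 'l, 'p) hdml \<Rightarrow> ('p \<Rightarrow> 'p fm) \<Rightarrow> ('c, 'l, 'p) hdml" where
  "subst_model M \<sigma> = M\<lparr>val := \<lambda>c. {p. \<exists>m. c \<in> cells M m \<and> sat M m c (\<sigma> p)}\<rparr>"

lemma hdml_model_subst_model: "hdml_model (subst_model M \<sigma>) = hdml_model M"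
  unfolding subst_model_def hdml_model_def cubical_set_def by simp

lemma subst_model_cubical_structure [simp]:
  "cells (subst_model M \<sigma>) = cells M" "sface (subst_model M \<sigma>) = sface M"
  "tface (subst_model M \<sigma>) = tface M"
  by (simp_all add: subst_model_def)

text \<open>Truth of \<open>subst \<sigma> a\<close> in \<open>M\<close> is truth of \<open>a\<close> in \<open>subst_model M \<sigma>\<close>;
  the atom case uses that every cell has a unique dimension.\<close>
lemma sat_subst:
  assumes M: "hdml_model M"
  shows "q \<in> cells M n \<Longrightarrow> sat M n q (subst \<sigma> a) = sat (subst_model M \<sigma>) n q a"
proof (induction a arbitrary: n q)
  case (Atom p)
  then show ?case using cells_disjoint[OF M] by (auto simp: subst_model_def)
next
  case (Dia_s a)
  then show ?case by auto
next
  case (Dia_t a)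
  have "sat M (n - 1) (tface M i q) (subst \<sigma> a) = sat (subst_model M \<sigma>) (n - 1) (tface M i q) a"
    if "1 \<le> i" "i \<le> n" for i
    using Dia_t.IH faces(2)[OF M Dia_t.prems that] by blast
  then show ?case by auto
qed auto

lemma derivable_valid: "derivable \<phi> \<Longrightarrow> hdml_model M \<Longrightarrow> valid_in M \<phi>"
proof (induction \<phi> arbitrary: M rule: derivable.induct)
  case (A1 a)
  then show ?case using skel_eval_sat by (metis taut_instance_def valid_inI)
next
  case (A5 i c)
  then show ?case by (blast intro: valid_A5)
next
  case (MP a b)
  then show ?case by (blast intro: valid_MP)
next
  case (Mono_s a b)
  then show ?case by (blast intro: valid_mono_s)
next
  case (Mono_t a b)
  then show ?case by (blast intro: valid_mono_t)
next
  case (Subst a \<sigma>)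
  then have "valid_in (subst_model M \<sigma>) a" by (simp add: hdml_model_subst_model)
  with Subst.prems show ?case by (simp add: valid_in_def sat_subst)
next
  case A6
  then show ?case by (rule valid_A6)
next
  case A7a
  then show ?case by (rule valid_A7a)
next
  case A7b
  then show ?case by (rule valid_A7b)
next
  case A8a
  then show ?case by (rule valid_A8a)
next
  case A8b
  then show ?case by (rule valid_A8b)
next
  case A9a
  then show ?case by (rule valid_A9a)
next
  case A9b
  then show ?case by (rule valid_A9b)
next
  case A10a
  then show ?case by (rule valid_A10a)
next
  case A10b
  then show ?case by (rule valid_A10b)
next
  case A2s
  then show ?case by (simp add: valid_in_def)
next
  case A2t
  then show ?case by (simp add: valid_in_def)
next
  case (A3s a b)
  show ?case by (simp only: valid_in_def sat_Iff sat_Disj sat.simps(4)) blast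
next
  case (A3t a b)
  show ?case by (simp only: valid_in_def sat_Iff sat_Disj sat.simps(5)) blast
next
  case (A4s a)
  show ?case by (simp add: valid_in_def Box_s_def)
next
  case (A4t a)
  show ?case by (simp add: valid_in_def Box_t_def)
qed

theorem mainTheorem8:
  fixes \<phi> :: "'p fm" and M :: "('c, 'l, 'p) hdml"
  assumes "derivable \<phi>" and "hdml_model M" and "q \<in> cells M n"
  shows "sat M n q \<phi>"
  using derivable_valid[OF assms(1,2)] assms(3) by (rule valid_inD)

end
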